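(* Let $H$ and $U$ be Hilbert spaces, let $A\colon D(A)\subset H\to H$ generate a strongly continuous contraction semigroup $\{e^{tA}\}_{t\ge0}$ on $H$, and let $B\colon U\to H$ be bounded linear with adjoint $B^*$. Suppose there exist constants $\rho,T_0>0$ and a positive continuous function $c\colon(0,\infty)\to\mathbb{R}$ such that for every $T\in(0,T_0]$ and every $\tilde\alpha\in L^\infty([0,T],[0,1])$ with $\int_0^T\tilde\alpha(t)\,dt\ge\rho T$, the function $\tilde\alpha$ is of class $\mathcal{K}(A,B,T,c(T))$. Let $(a_n,b_n)$, $n\in\mathbb{N}$, be a sequence of pairwise disjoint intervals in $[0,\infty)$ and let $\alpha\in L^\infty([0,\infty),[0,1])$ satisfy $\int_{a_n}^{b_n}\alpha(t)\,dt\ge\rho(b_n-a_n)$ for all $n$ and $\sum_{n=1}^\infty c(b_n-a_n)=\infty$. Then for every $z_0\in H$, the mild solution $z(\cdot)$ of $\dot z=Az-\alpha(t)BB^*z$, $z(0)=z_0$, satisfies $\|z(t)\|_H\to0$ as $t\to\infty$.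
   Context: For $T>0$ and $c>0$, a function $\tilde\alpha\in L^\infty([0,T],[0,1])$ is said to be of class $\mathcal{K}(A,B,T,c)$ if $\int_0^T\tilde\alpha(t)\|B^*e^{tA}z_0\|_U^2\,dt\ge c\|z_0\|_H^2$ for all $z_0\in H$. The mild solution of $\dot z=Az-\alpha(t)BB^*z$, $z(0)=z_0$ is the unique $z\in C([0,\infty);H)$ with $z(t)=e^{tA}z_0-\int_0^te^{(t-s)A}\alpha(s)BB^*z(s)\,ds$ for all $t\ge0$. *)

theory Defs
  imports "HOL-Analysis.Analysis"
begin

text \<open>Strongly continuous contraction semigroup S t = e^{tA} on a (real) Hilbert space.\<close>
definition C0_contraction_semigroup :: "(real \<Rightarrow> 'h::{real_inner,complete_space} \<Rightarrow> 'h) \<Rightarrow> bool" where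
  "C0_contraction_semigroup S \<longleftrightarrow>
     (\<forall>t\<ge>0. bounded_linear (S t)) \<and>
     S 0 = id \<and>
     (\<forall>t\<ge>0. \<forall>s\<ge>0. S (t + s) = S t \<circ> S s) \<and>
     (\<forall>t\<ge>0. \<forall>x. norm (S t x) \<le> norm x) \<and>
     (\<forall>x. continuous_on {0..} (\<lambda>t. S t x))"

definition is_adjoint :: "('u::real_inner \<Rightarrow> 'h::real_inner) \<Rightarrow> ('h \<Rightarrow> 'u) \<Rightarrow> bool" where
  "is_adjoint B Bs \<longleftrightarrow> (\<forall>u h. inner (B u) h = inner u (Bs h))"

text \<open>(A representative of) an element of L^infty(I,[0,1]).\<close>
definition Linf01 :: "real set \<Rightarrow> (real \<Rightarrow> real) \<Rightarrow> bool" where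
  "Linf01 I a \<longleftrightarrow> set_borel_measurable lborel I a \<and> (\<forall>t\<in>I. 0 \<le> a t \<and> a t \<le> 1)"

definition classK :: "(real \<Rightarrow> 'h::{real_inner,complete_space} \<Rightarrow> 'h) \<Rightarrow> ('h \<Rightarrow> 'u::real_inner)
    \<Rightarrow> real \<Rightarrow> real \<Rightarrow> (real \<Rightarrow> real) \<Rightarrow> bool" where
  "classK S Bs T c a \<longleftrightarrow> Linf01 {0..T} a \<and>
     (\<forall>z0. (LBINT t:{0..T}. a t * (norm (Bs (S t z0)))\<^sup>2) \<ge> c * (norm z0)\<^sup>2)"

text \<open>Mild solution of z' = A z - alpha(t) B B^* z, z(0) = z0.\<close>
definition mild_solution :: "(real \<Rightarrow> 'h::{real_inner,complete_space} \<Rightarrow> 'h) \<Rightarrow> ('u::real_inner \<Rightarrow> 'h)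
    \<Rightarrow> ('h \<Rightarrow> 'u) \<Rightarrow> (real \<Rightarrow> real) \<Rightarrow> 'h \<Rightarrow> (real \<Rightarrow> 'h) \<Rightarrow> bool" where
  "mild_solution S B Bs \<alpha> z0 z \<longleftrightarrow> continuous_on {0..} z \<and>
     (\<forall>t\<ge>0. ((\<lambda>s. S (t - s) (\<alpha> s *\<^sub>R B (Bs (z s)))) has_integral (S t z0 - z t)) {0..t})"

end

theory Submission
  imports Defs
begin

text \<open>
  Along a mild solution the energy \<open>\<parallel>z(t)\<parallel>\<^sup>2 + 2\<integral>\<^sub>0\<^sup>t \<alpha>\<parallel>B\<^sup>*z\<parallel>\<^sup>2\<close> is nonincreasing; this
  follows from the Duhamel formula by estimating its increments over short steps.
  On a window \<open>[a, a+T]\<close> with \<open>T \<le> T\<^sub>0\<close> on which \<open>\<alpha>\<close> has density at least \<open>\<rho>\<close>, the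
  solution differs from the free trajectory \<open>e\<^sup>s\<^sup>Az(a)\<close> by at most
  \<open>\<parallel>B\<parallel>\<integral>\<alpha>\<parallel>B\<^sup>*z\<parallel>\<close>, which by Cauchy--Schwarz is controlled by the energy \<open>D\<close>
  dissipated on the window. The observability inequality of class \<open>\<K>\<close> for the free
  trajectory then yields \<open>c(T)\<parallel>z(a)\<parallel>\<^sup>2 \<le> 2D(1 + \<parallel>B\<parallel>\<^sup>4T\<^sub>0\<^sup>2)\<close>, so the energy drops by a
  factor \<open>exp(-c(T)/(1 + \<parallel>B\<parallel>\<^sup>4T\<^sub>0\<^sup>2))\<close> across the window. A longer interval contains
  a dense window of length in \<open>(T\<^sub>0/2, T\<^sub>0]\<close>, where \<open>c\<close> is bounded below by some \<open>m > 0\<close>.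
  Multiplying these factors over the disjoint intervals and using
  \<open>\<Sum> min(c(b\<^sub>n - a\<^sub>n), m) = \<infinity>\<close> gives decay to zero.
\<close>

section \<open>Real analysis\<close>

lemma is_adjoint_bounded_linear:
  fixes B :: "'u::real_inner \<Rightarrow> 'h::real_inner"
  assumes B: "bounded_linear B" and adj: "is_adjoint B Bs"
  shows "bounded_linear Bs"
proof -
  have adj_eq: "inner (B u) h = inner u (Bs h)" for u h
    using adj by (simp add: is_adjoint_def)
  obtain K where K: "\<And>u. norm (B u) \<le> norm u * K" "K > 0"
    using bounded_linear.pos_bounded[OF B] by blast
  have eq: "x = y" if "\<And>u. inner u x = inner u y" for x y :: 'u
  proof -
    have "inner (x - y) x = inner (x - y) y" using that by simp
    then have "inner (x - y) (x - y) = 0" by (simp add: inner_diff_right)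
    then show ?thesis by simp
  qed
  show ?thesis
  proof (rule bounded_linear_intro[where K = K])
    fix x y show "Bs (x + y) = Bs x + Bs y"
      by (rule eq) (simp add: inner_add_right adj_eq[symmetric])
  next
    fix r x show "Bs (r *\<^sub>R x) = r *\<^sub>R Bs x"
      by (rule eq) (simp add: adj_eq[symmetric])
  next
    fix x
    have "(norm (Bs x))\<^sup>2 = inner (B (Bs x)) x" by (simp add: adj_eq power2_norm_eq_inner)
    also have "\<dots> \<le> norm (B (Bs x)) * norm x" by (rule norm_cauchy_schwarz)
    also have "\<dots> \<le> norm (Bs x) * K * norm x" using K by (simp add: mult_right_mono)
    finally have "norm (Bs x) * norm (Bs x) \<le> norm (Bs x) * (norm x * K)"
      by (simp add: power2_eq_square mult_ac)
    then show "norm (Bs x) \<le> norm x * K"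
      by (cases "norm (Bs x) = 0") (use K in \<open>auto simp: mult_le_cancel_left\<close>)
  qed
qed

lemma norm_le_of_inner_le:
  fixes w :: "'a::real_inner"
  assumes "\<And>e. \<bar>inner e w\<bar> \<le> norm e * M" and "0 \<le> M"
  shows "norm w \<le> M"
proof (cases "w = 0")
  case False
  then have "norm w * norm w \<le> norm w * M"
    using assms(1)[of w] by (simp add: power2_norm_eq_inner[symmetric] power2_eq_square)
  then show ?thesis using False by simp
qed (use assms in simp)

lemma norm_le_integral_of_weak_has_integral:
  fixes f :: "real \<Rightarrow> 'a::real_inner"
  assumes weak: "\<And>e. ((\<lambda>s. inner e (f s)) has_integral inner e w) {a..b}"
    and g: "g integrable_on {a..b}" and f_le: "\<And>s. s \<in> {a..b} \<Longrightarrow> norm (f s) \<le> g s"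
  shows "norm w \<le> integral {a..b} g"
proof (rule norm_le_of_inner_le)
  show "0 \<le> integral {a..b} g"
    using g f_le by (intro integral_nonneg) (auto intro: order_trans[OF norm_ge_zero])
  fix e
  have "\<bar>inner e w\<bar> = norm (integral {a..b} (\<lambda>s. inner e (f s)))"
    using integral_unique[OF weak] by simp
  also have "\<dots> \<le> integral {a..b} (\<lambda>s. norm e * g s)"
  proof (rule integral_norm_bound_integral)
    fix s assume "s \<in> {a..b}"
    then show "norm (inner e (f s)) \<le> norm e * g s"
      using Cauchy_Schwarz_ineq2[of e "f s"] mult_left_mono[OF f_le, of s "norm e"] by simp
  qed (use weak g in \<open>auto intro: integrable_on_mult_right\<close>)
  finally show "\<bar>inner e w\<bar> \<le> norm e * integral {a..b} g" by simp
qed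

lemma set_integrable_bounded_mult_continuous:
  fixes p q :: "real \<Rightarrow> real"
  assumes p: "set_borel_measurable lborel {u..v} p" and p_le: "\<And>x. x \<in> {u..v} \<Longrightarrow> \<bar>p x\<bar> \<le> 1"
    and q: "continuous_on {u..v} q"
  shows "set_integrable lborel {u..v} (\<lambda>x. p x * q x)"
proof -
  obtain M where M: "\<And>x. x \<in> {u..v} \<Longrightarrow> \<bar>q x\<bar> \<le> M"
    using compact_imp_bounded[OF compact_continuous_image[OF q compact_Icc]]
    unfolding bounded_iff by (metis atLeastAtMost_iff image_eqI real_norm_def)
  have "(\<lambda>x. indicator {u..v} x *\<^sub>R q x) \<in> borel_measurable lborel"
    using borel_measurable_continuous_on_indicator[OF _ q] by simp
  then have "(\<lambda>x. (indicator {u..v} x *\<^sub>R p x) * (indicator {u..v} x *\<^sub>R q x)) \<in> borel_measurable lborel"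
    using p unfolding set_borel_measurable_def by measurable
  moreover have "(\<lambda>x. (indicator {u..v} x *\<^sub>R p x) * (indicator {u..v} x *\<^sub>R q x))
      = (\<lambda>x. indicator {u..v} x *\<^sub>R (p x * q x))"
    by (auto simp: indicator_def fun_eq_iff)
  ultimately have meas: "(\<lambda>x. indicator {u..v} x *\<^sub>R (p x * q x)) \<in> borel_measurable lborel"
    by simp
  have "\<bar>p x * q x\<bar> \<le> M" if "x \<in> {u..v}" for x
    using mult_mono[OF p_le[OF that] M[OF that]] by (simp add: abs_mult)
  then show ?thesis
    unfolding set_integrable_def
    by (intro integrableI_bounded_set[where A="{u..v}" and B=M] meas) (auto simp: emeasure_lborel_Icc_eq)
qed

lemma le_of_bounded_increments:
  fixes \<phi> :: "real \<Rightarrow> real"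
  assumes t12: "t1 \<le> t2" and \<delta>: "\<delta> > 0"
    and step: "\<And>t h. t1 \<le> t \<Longrightarrow> t \<le> t2 \<Longrightarrow> 0 < h \<Longrightarrow> h \<le> \<delta> \<Longrightarrow> \<phi> (t + h) \<le> \<phi> t + \<epsilon> * h"
  shows "\<phi> t2 \<le> \<phi> t1 + \<epsilon> * (t2 - t1)"
proof (cases "t1 = t2")
  case False
  then have lt: "t1 < t2" using t12 by simp
  define n where "n = nat \<lceil>(t2 - t1) / \<delta>\<rceil>"
  have n_ge: "real n \<ge> (t2 - t1) / \<delta>" using lt \<delta> by (simp add: n_def)
  have "(t2 - t1) / \<delta> > 0" using lt \<delta> by simp
  then have n1: "n \<ge> 1" using n_ge by linarith
  define d where "d = (t2 - t1) / real n"
  have d: "0 < d" "d \<le> \<delta>" "real n * d = t2 - t1"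
    using lt n1 n_ge \<delta> by (auto simp: d_def field_simps)
  have "\<phi> (t1 + real k * d) \<le> \<phi> t1 + \<epsilon> * (real k * d)" if "k \<le> n" for k
    using that
  proof (induction k)
    case (Suc k)
    have "real k * d \<le> real n * d" using Suc.prems d by (intro mult_right_mono) auto
    then have "\<phi> (t1 + real k * d + d) \<le> \<phi> (t1 + real k * d) + \<epsilon> * d"
      using d by (intro step) auto
    with Suc show ?case by (simp add: algebra_simps)
  qed simp
  from this[of n] show ?thesis using d by simp
qed simp

lemma le_of_small_increments:
  fixes \<phi> :: "real \<Rightarrow> real"
  assumes t12: "t1 \<le> t2"
    and small: "\<And>\<epsilon>. \<epsilon> > 0 \<Longrightarrow> \<exists>\<delta>>0. \<forall>t h. t1 \<le> t \<longrightarrow> t \<le> t2 \<longrightarrow> 0 < h \<longrightarrow> h \<le> \<delta> \<longrightarrow>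
                 \<phi> (t + h) \<le> \<phi> t + \<epsilon> * h"
  shows "\<phi> t2 \<le> \<phi> t1"
proof (cases "t1 = t2")
  case False
  then have len: "t2 - t1 > 0" using t12 by simp
  show ?thesis
  proof (rule field_le_epsilon)
    fix e :: real assume e: "0 < e"
    obtain \<delta> where "\<delta> > 0" and "\<forall>t h. t1 \<le> t \<longrightarrow> t \<le> t2 \<longrightarrow> 0 < h \<longrightarrow> h \<le> \<delta> \<longrightarrow>
        \<phi> (t + h) \<le> \<phi> t + e / (t2 - t1) * h"
      using small[of "e / (t2 - t1)"] e len by auto
    then have "\<phi> t2 \<le> \<phi> t1 + e / (t2 - t1) * (t2 - t1)"
      by (intro le_of_bounded_increments[OF t12]) auto
    then show "\<phi> t2 \<le> \<phi> t1 + e" using len by simp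
  qed
qed simp

lemma sq_le_of_AM_GM_bounds:
  fixes P W D :: real
  assumes W: "0 \<le> W" and D: "0 \<le> D" and AM_GM: "\<And>l. l > 0 \<Longrightarrow> \<bar>P\<bar> \<le> (D / l + l * W) / 2"
  shows "P\<^sup>2 \<le> W * D"
proof (cases "P = 0")
  case False
  then have P: "\<bar>P\<bar> > 0" by simp
  show ?thesis
  proof (cases "W = 0")
    case True
    have "\<bar>P\<bar> \<le> D / ((D + 1) / \<bar>P\<bar>) / 2" using AM_GM[of "(D + 1) / \<bar>P\<bar>"] True P D by simp
    also have "\<dots> < \<bar>P\<bar>" using P D by (simp add: field_simps add_nonneg_pos)
    finally show ?thesis by simp
  next
    case False
    then have "\<bar>P\<bar> \<le> (D / (\<bar>P\<bar> / W) + \<bar>P\<bar>) / 2" using AM_GM[of "\<bar>P\<bar> / W"] P W by simp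
    then show ?thesis using P W False by (simp add: field_simps power2_eq_square)
  qed
qed (use W D in simp)

lemma integral_weighted_Cauchy_Schwarz:
  fixes w q :: "real \<Rightarrow> real"
  assumes w: "w integrable_on I" and wq: "(\<lambda>x. w x * q x) integrable_on I"
    and wq2: "(\<lambda>x. w x * (q x)\<^sup>2) integrable_on I" and w_nonneg: "\<And>x. x \<in> I \<Longrightarrow> 0 \<le> w x"
  shows "(integral I (\<lambda>x. w x * q x))\<^sup>2 \<le> integral I w * integral I (\<lambda>x. w x * (q x)\<^sup>2)"
proof (rule sq_le_of_AM_GM_bounds)
  show "0 \<le> integral I w" "0 \<le> integral I (\<lambda>x. w x * (q x)\<^sup>2)"
    using w wq2 w_nonneg by (auto intro: integral_nonneg)
  fix l :: real assume l: "l > 0"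
  let ?bound = "\<lambda>x. (w x * (q x)\<^sup>2 / l + l * w x) / 2"
  have bound: "(?bound has_integral (integral I (\<lambda>x. w x * (q x)\<^sup>2) / l + l * integral I w) / 2) I"
    using w wq2 by (intro has_integral_divide has_integral_add has_integral_mult_right) auto
  have "\<bar>q x\<bar> \<le> ((q x)\<^sup>2 / l + l) / 2" for x
  proof -
    have "0 \<le> (\<bar>q x\<bar> - l)\<^sup>2" by simp
    then show ?thesis using l by (simp add: field_simps power2_eq_square algebra_simps)
  qed
  then have "w x * \<bar>q x\<bar> \<le> w x * (((q x)\<^sup>2 / l + l) / 2)" if "x \<in> I" for x
    using w_nonneg[OF that] by (rule mult_left_mono)
  then have "\<bar>w x * q x\<bar> \<le> ?bound x" if "x \<in> I" for x
    using that w_nonneg[OF that] by (simp add: abs_mult algebra_simps add_divide_distrib)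
  then have "norm (integral I (\<lambda>x. w x * q x)) \<le> integral I ?bound"
    using bound wq by (intro integral_norm_bound_integral) auto
  then show "\<bar>integral I (\<lambda>x. w x * q x)\<bar> \<le> (integral I (\<lambda>x. w x * (q x)\<^sup>2) / l + l * integral I w) / 2"
    using integral_unique[OF bound] by simp
qed

lemma bounded_on_Icc:
  fixes f :: "real \<Rightarrow> 'a::real_normed_vector"
  assumes "continuous_on {a..b} f"
  obtains M where "M > 0" "\<And>s. s \<in> {a..b} \<Longrightarrow> norm (f s) \<le> M"
  using compact_imp_bounded[OF compact_continuous_image[OF assms compact_Icc]] that
  unfolding bounded_pos by auto

lemma continuous_pos_lower_bound:
  fixes c :: "real \<Rightarrow> real"
  assumes "continuous_on {u..v} c" "\<And>t. t \<in> {u..v} \<Longrightarrow> c t > 0"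
  obtains m where "m > 0" "\<And>t. t \<in> {u..v} \<Longrightarrow> m \<le> c t"
proof (cases "u \<le> v")
  case True
  then obtain t0 where "t0 \<in> {u..v}" "\<And>t. t \<in> {u..v} \<Longrightarrow> c t0 \<le> c t"
    using continuous_attains_inf[OF compact_Icc _ assms(1)] by auto
  then show ?thesis using that assms(2) by blast
qed (use that[of 1] in auto)

lemma integral_equal_pieces:
  fixes f :: "real \<Rightarrow> real"
  assumes f: "f integrable_on {a..a + real n * d}" and d: "0 \<le> d"
  shows "integral {a..a + real n * d} f = (\<Sum>j<n. integral {a + real j * d..a + real j * d + d} f)"
  using f
proof (induction n)
  case (Suc n)
  have le: "a \<le> a + real n * d" "a + real n * d \<le> a + real (Suc n) * d"
    using d by (auto simp: algebra_simps)
  then have "f integrable_on {a..a + real n * d}"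
    using integrable_subinterval_real[OF Suc.prems] by auto
  then show ?case
    using Henstock_Kurzweil_Integration.integral_combine[OF le, of f] Suc
    by (simp add: algebra_simps)
qed simp

lemma exists_dense_subinterval:
  fixes f :: "real \<Rightarrow> real"
  assumes f: "f integrable_on {a..b}" and T: "0 < T" "T < b - a"
    and dense: "integral {a..b} f \<ge> \<rho> * (b - a)"
  obtains p L where "a \<le> p" "p + L \<le> b" "T / 2 < L" "L \<le> T" "integral {p..p+L} f \<ge> \<rho> * L"
proof -
  define n where "n = nat \<lceil>(b - a) / T\<rceil>"
  have "(b - a) / T > 1" using T by simp
  then have n: "real n \<ge> (b - a) / T" "real n < (b - a) / T + 1" "real n > 1"
    unfolding n_def by linarith+
  define d where "d = (b - a) / real n"
  have d: "0 < d" "real n * d = b - a" using T n by (auto simp: d_def)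
  have "d \<le> T" "T / 2 < d"
    using n T d(2) by (auto simp: d_def field_simps)
  moreover have piece: "a \<le> a + real j * d" "a + real j * d + d \<le> b" if "j < n" for j
  proof -
    have "real (Suc j) * d \<le> real n * d" using that d by (intro mult_right_mono) auto
    then show "a \<le> a + real j * d" "a + real j * d + d \<le> b" using d by (auto simp: algebra_simps)
  qed
  moreover have "\<exists>j<n. integral {a + real j * d..a + real j * d + d} f \<ge> \<rho> * d"
  proof (rule ccontr)
    assume "\<not> ?thesis"
    then have "(\<Sum>j<n. integral {a + real j * d..a + real j * d + d} f) < (\<Sum>j<n. \<rho> * d)"
      using n by (intro sum_strict_mono) auto
    then have "integral {a..b} f < (\<Sum>j<n. \<rho> * d)"
      using integral_equal_pieces[of f a n d] f d by simp
    with dense d show False by (simp add: mult_ac)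
  qed
  ultimately show ?thesis using that by blast
qed

lemma disjoint_intervals_ordered:
  fixes a b :: "nat \<Rightarrow> real"
  assumes ab: "\<And>n. a n < b n"
    and disj: "\<forall>m n. m \<noteq> n \<longrightarrow> {a m<..<b m} \<inter> {a n<..<b n} = {}"
    and "m \<noteq> n" "a m \<le> a n"
  shows "b m \<le> a n"
proof (rule ccontr)
  assume "\<not> b m \<le> a n"
  then have "(a n + min (b m) (b n)) / 2 \<in> {a m<..<b m} \<inter> {a n<..<b n}"
    using ab[of n] assms(4) by auto
  with disj assms(3) show False by blast
qed

lemma decay_along_disjoint_intervals:
  fixes E :: "real \<Rightarrow> real" and a b k :: "nat \<Rightarrow> real"
  assumes antimono: "\<And>s t. 0 \<le> s \<Longrightarrow> s \<le> t \<Longrightarrow> E t \<le> E s"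
    and decay: "\<And>n. E (b n) \<le> exp (- k n) * E (a n)"
    and ab: "\<And>n. 0 \<le> a n \<and> a n < b n"
    and disj: "\<forall>m n. m \<noteq> n \<longrightarrow> {a m<..<b m} \<inter> {a n<..<b n} = {}"
    and F: "finite F" and t: "0 \<le> t" "\<forall>n\<in>F. b n \<le> t"
  shows "E t \<le> exp (- sum k F) * E 0"
  using F t
proof (induction "card F" arbitrary: F t rule: less_induct)
  case less
  show ?case
  proof (cases "F = {}")
    case True then show ?thesis using antimono[of 0 t] less.prems by simp
  next
    case False
    \<comment> \<open>peel off the interval that starts last; all others end before it starts\<close>
    have "Max (a ` F) \<in> a ` F" using False less.prems(1) by simp
    then obtain n where n: "n \<in> F" "a n = Max (a ` F)" by auto
    define F' where "F' = F - {n}"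
    have "a m \<le> a n" if "m \<in> F" for m using n(2) that less.prems(1) by simp
    then have "\<forall>m\<in>F'. b m \<le> a n"
      using disjoint_intervals_ordered[of a b] ab disj by (auto simp: F'_def)
    then have IH: "E (a n) \<le> exp (- sum k F') * E 0"
      using less.hyps[of F' "a n"] less.prems(1) ab[of n] n(1) card_Diff1_less[of F n]
      by (simp add: F'_def)
    have "E t \<le> E (b n)" using antimono[of "b n" t] ab[of n] less.prems(3) n(1) by simp
    also have "\<dots> \<le> exp (- k n) * E (a n)" by (rule decay)
    also have "\<dots> \<le> exp (- k n) * (exp (- sum k F') * E 0)" using IH by (simp add: mult_left_mono)
    also have "\<dots> = exp (- sum k F) * E 0"
      using sum.remove[OF less.prems(1) n(1), of k] by (simp add: F'_def exp_add[symmetric] algebra_simps)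
    finally show ?thesis .
  qed
qed

lemma not_summable_min:
  fixes c :: "nat \<Rightarrow> real"
  assumes "\<not> summable c" and "m > 0"
  shows "\<not> summable (\<lambda>n. min (c n) m)"
proof
  assume s: "summable (\<lambda>n. min (c n) m)"
  have "eventually (\<lambda>n. min (c n) m < m) sequentially"
    using order_tendstoD(2)[OF summable_LIMSEQ_zero[OF s] \<open>m > 0\<close>] by simp
  then have "eventually (\<lambda>n. min (c n) m = c n) sequentially"
    by eventually_elim (auto simp: min_def split: if_splits)
  with s have "summable c" by (simp add: summable_cong)
  with assms show False by simp
qed

lemma tendsto_zero_of_not_summable_decay:
  fixes E :: "real \<Rightarrow> real" and k :: "nat \<Rightarrow> real"
  assumes E_nonneg: "\<And>t. 0 \<le> E t" and k_nonneg: "\<And>n. 0 \<le> k n" and "\<not> summable k"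
    and decay: "\<And>N. \<exists>T. \<forall>t\<ge>T. E t \<le> exp (- sum k {..<N}) * E 0"
  shows "(E \<longlongrightarrow> 0) at_top"
proof (rule order_tendstoI)
  fix y :: real assume "y < 0"
  then show "eventually (\<lambda>t. y < E t) at_top" using E_nonneg by (auto intro: less_le_trans always_eventually)
next
  fix \<epsilon> :: real assume \<epsilon>: "0 < \<epsilon>"
  have "\<exists>N. sum k {..<N} > E 0 / \<epsilon>"
    using summableI_nonneg_bounded[of k "E 0 / \<epsilon>"] k_nonneg \<open>\<not> summable k\<close> by (meson not_less)
  then obtain N where N: "sum k {..<N} > E 0 / \<epsilon>" by blast
  obtain T where T: "\<And>t. t \<ge> T \<Longrightarrow> E t \<le> exp (- sum k {..<N}) * E 0" using decay by blast
  have "(1 + sum k {..<N}) * E 0 \<le> exp (sum k {..<N}) * E 0"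
    using exp_ge_add_one_self E_nonneg by (rule mult_right_mono)
  then have "exp (- sum k {..<N}) * E 0 \<le> E 0 / (1 + sum k {..<N})"
    using sum_nonneg[of "{..<N}" k] k_nonneg by (simp add: exp_minus field_simps)
  also have "\<dots> < \<epsilon>"
    using N \<epsilon> E_nonneg[of 0] sum_nonneg[of "{..<N}" k] k_nonneg by (simp add: field_simps)
  finally show "eventually (\<lambda>t. E t < \<epsilon>) at_top"
    using T by (auto simp: eventually_at_top_linorder intro: le_less_trans)
qed

section \<open>Contraction semigroups\<close>

locale contraction_semigroup =
  fixes S :: "real \<Rightarrow> 'h::{real_inner,complete_space} \<Rightarrow> 'h"
  assumes C0: "C0_contraction_semigroup S"
begin

lemma bounded_linear_S: "t \<ge> 0 \<Longrightarrow> bounded_linear (S t)"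
  and S_zero [simp]: "S 0 x = x"
  and S_add: "t \<ge> 0 \<Longrightarrow> s \<ge> 0 \<Longrightarrow> S (t + s) x = S t (S s x)"
  and norm_S_le: "t \<ge> 0 \<Longrightarrow> norm (S t x) \<le> norm x"
  and continuous_on_S: "continuous_on {0..} (\<lambda>t. S t x)"
  using C0 by (auto simp: C0_contraction_semigroup_def)

lemma S_diff: "t \<ge> 0 \<Longrightarrow> S t (x - y) = S t x - S t y"
  and S_scaleR: "t \<ge> 0 \<Longrightarrow> S t (c *\<^sub>R x) = c *\<^sub>R S t x"
  using bounded_linear_S[of t] by (simp_all add: linear_simps)

lemma strong_continuity_at_zero:
  assumes "\<epsilon> > 0"
  shows "\<exists>\<delta>>0. \<forall>r. 0 \<le> r \<and> r < \<delta> \<longrightarrow> norm (S r x - x) < \<epsilon>"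
proof -
  have "\<forall>e>0. \<exists>d>0. \<forall>r\<in>{0..}. dist r 0 < d \<longrightarrow> dist (S r x) (S 0 x) < e"
    using continuous_on_S[of x] unfolding continuous_on_iff by (metis atLeast_iff order_refl)
  then obtain \<delta> where "\<delta> > 0" "\<And>r. 0 \<le> r \<Longrightarrow> dist r 0 < \<delta> \<Longrightarrow> dist (S r x) (S 0 x) < \<epsilon>"
    using assms by auto
  then show ?thesis by (auto simp: dist_norm)
qed

lemma uniform_strong_continuity:
  assumes K: "compact K" and \<epsilon>: "\<epsilon> > 0"
  obtains \<delta> where "\<delta> > 0" "\<And>x r. x \<in> K \<Longrightarrow> 0 \<le> r \<Longrightarrow> r \<le> \<delta> \<Longrightarrow> norm (S r x - x) \<le> \<epsilon>"
proof -
  have "\<forall>x. \<exists>\<delta>>0. \<forall>r. 0 \<le> r \<and> r < \<delta> \<longrightarrow> norm (S r x - x) < \<epsilon> / 3"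
    using strong_continuity_at_zero[of "\<epsilon> / 3"] \<epsilon> by simp
  then obtain d where d: "\<And>x. d x > 0" "\<And>x r. 0 \<le> r \<Longrightarrow> r < d x \<Longrightarrow> norm (S r x - x) < \<epsilon> / 3"
    by metis
  obtain D where D: "D \<subseteq> K" "finite D" "K \<subseteq> (\<Union>y\<in>D. ball y (\<epsilon> / 3))"
    using compactE_image[OF K, of K "\<lambda>y. ball y (\<epsilon> / 3)"] \<epsilon> by force
  define \<delta> where "\<delta> = Min (insert 1 (d ` D)) / 2"
  have Min_pos: "Min (insert 1 (d ` D)) > 0" using D(2) d(1) by (simp add: Min_gr_iff)
  have \<delta>: "\<delta> > 0" "\<And>y. y \<in> D \<Longrightarrow> \<delta> < d y"
  proof -
    show "\<delta> > 0" using Min_pos by (simp add: \<delta>_def)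
    fix y assume "y \<in> D"
    then have "Min (insert 1 (d ` D)) \<le> d y" using D(2) by (intro Min_le) auto
    then show "\<delta> < d y" using Min_pos by (simp add: \<delta>_def)
  qed
  show ?thesis
  proof (rule that[OF \<delta>(1)])
    fix x r assume x: "x \<in> K" and r: "0 \<le> r" "r \<le> \<delta>"
    obtain y where y: "y \<in> D" "norm (x - y) < \<epsilon> / 3" using D x by (auto simp: dist_norm norm_minus_commute)
    \<comment> \<open>\<open>S r\<close> is a contraction, so the error at \<open>x\<close> is controlled by that at the nearby centre \<open>y\<close>\<close>
    have "S r x - x = S r (x - y) + (S r y - y) + (y - x)" using S_diff[OF r(1)] by simp
    then have "norm (S r x - x) \<le> norm (S r (x - y)) + norm (S r y - y) + norm (y - x)"
      by (metis norm_triangle_le order_refl add_mono)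
    also have "\<dots> < \<epsilon> / 3 + \<epsilon> / 3 + \<epsilon> / 3"
      using norm_S_le[OF r(1), of "x - y"] d(2)[OF r(1), of y] \<delta>(2)[OF y(1)] r y(2)
      by (simp add: norm_minus_commute)
    finally show "norm (S r x - x) \<le> \<epsilon>" by simp
  qed
qed

lemma inner_S_perturbation_le:
  assumes r: "0 \<le> r" and \<beta>: "0 \<le> \<beta>" "\<beta> \<le> 1"
  shows "\<bar>inner y (S r (\<beta> *\<^sub>R u)) - inner x (\<beta> *\<^sub>R u)\<bar> \<le> norm (y - x) * norm u + norm x * norm (S r u - u)"
proof -
  have "inner y (S r (\<beta> *\<^sub>R u)) - inner x (\<beta> *\<^sub>R u) = \<beta> * (inner (y - x) (S r u) + inner x (S r u - u))"
    using r by (simp add: S_scaleR algebra_simps)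
  also have "\<bar>\<dots>\<bar> \<le> \<bar>inner (y - x) (S r u)\<bar> + \<bar>inner x (S r u - u)\<bar>"
    using \<beta> by (simp add: abs_mult mult_le_one order_trans[OF _ abs_triangle_ineq] mult_left_le_one_le)
  also have "\<dots> \<le> norm (y - x) * norm u + norm x * norm (S r u - u)"
    using Cauchy_Schwarz_ineq2[of "y - x" "S r u"] Cauchy_Schwarz_ineq2[of x "S r u - u"]
      mult_left_mono[OF norm_S_le[OF r, of u], of "norm (y - x)"] by simp
  finally show ?thesis .
qed

end

section \<open>Energy dissipation along the damped trajectory\<close>

locale damped_system = contraction_semigroup S
  for S :: "real \<Rightarrow> 'h::{real_inner,complete_space} \<Rightarrow> 'h" +
  fixes B :: "'u::{real_inner,complete_space} \<Rightarrow> 'h" and Bs :: "'h \<Rightarrow> 'u"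
    and \<alpha> :: "real \<Rightarrow> real" and z0 :: 'h and z :: "real \<Rightarrow> 'h"
  assumes B: "bounded_linear B" and Bs: "is_adjoint B Bs"
    and alpha: "Linf01 {0..} \<alpha>" and sol: "mild_solution S B Bs \<alpha> z0 z"
begin

abbreviation feedback :: "real \<Rightarrow> 'h" where
  "feedback s \<equiv> \<alpha> s *\<^sub>R B (Bs (z s))"

abbreviation dissipation :: "real \<Rightarrow> real" where
  "dissipation s \<equiv> \<alpha> s * (norm (Bs (z s)))\<^sup>2"

lemma continuous_on_z: "continuous_on {0..} z"
  and duhamel: "t \<ge> 0 \<Longrightarrow> ((\<lambda>s. S (t - s) (feedback s)) has_integral (S t z0 - z t)) {0..t}"
  using sol by (simp_all add: mild_solution_def)

lemma alpha_nonneg: "t \<ge> 0 \<Longrightarrow> 0 \<le> \<alpha> t"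
  and alpha_le_one: "t \<ge> 0 \<Longrightarrow> \<alpha> t \<le> 1"
  and set_borel_measurable_alpha: "set_borel_measurable lborel {0..} \<alpha>"
  using alpha by (auto simp: Linf01_def)

lemma dissipation_nonneg: "s \<ge> 0 \<Longrightarrow> 0 \<le> dissipation s"
  by (simp add: alpha_nonneg)

lemma bounded_linear_Bs: "bounded_linear Bs"
  using is_adjoint_bounded_linear[OF B Bs] .

lemma inner_z_feedback: "inner (z s) (feedback s) = dissipation s"
  using Bs by (simp add: is_adjoint_def inner_commute[of "z s"] power2_norm_eq_inner)

definition Bnorm :: real where
  "Bnorm = onorm B + onorm Bs + 1"

lemma Bnorm_pos: "Bnorm > 0"
  using onorm_pos_le[OF B] onorm_pos_le[OF bounded_linear_Bs] by (simp add: Bnorm_def)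

lemma norm_B_le: "norm (B u) \<le> Bnorm * norm u"
  and norm_Bs_le: "norm (Bs x) \<le> Bnorm * norm x"
proof -
  have "onorm B \<le> Bnorm" "onorm Bs \<le> Bnorm"
    using onorm_pos_le[OF B] onorm_pos_le[OF bounded_linear_Bs] by (auto simp: Bnorm_def)
  then show "norm (B u) \<le> Bnorm * norm u" "norm (Bs x) \<le> Bnorm * norm x"
    using onorm[OF B, of u] onorm[OF bounded_linear_Bs, of x]
    by (meson mult_right_mono norm_ge_zero order_trans)+
qed

lemma continuous_on_Bs_z: "continuous_on {0..} (\<lambda>s. Bs (z s))"
  by (rule continuous_on_compose2[OF linear_continuous_on[OF bounded_linear_Bs] continuous_on_z]) auto

lemma continuous_on_B_Bs_z: "continuous_on {0..} (\<lambda>s. B (Bs (z s)))"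
  by (rule continuous_on_compose2[OF linear_continuous_on[OF B] continuous_on_Bs_z]) auto

lemma continuous_on_Bs_S: "continuous_on {0..} (\<lambda>s. Bs (S s x))"
  by (rule continuous_on_compose2[OF linear_continuous_on[OF bounded_linear_Bs] continuous_on_S]) auto

lemma set_integrable_alpha_mult:
  assumes "0 \<le> u" "continuous_on {u..v} q"
  shows "set_integrable lborel {u..v} (\<lambda>s. \<alpha> s * q s)"
proof (rule set_integrable_bounded_mult_continuous[OF _ _ assms(2)])
  show "set_borel_measurable lborel {u..v} \<alpha>"
    using assms(1) by (auto intro: set_borel_measurable_subset[OF set_borel_measurable_alpha])
qed (use assms(1) alpha_nonneg alpha_le_one in auto)

lemma integrable_alpha_mult: "0 \<le> u \<Longrightarrow> continuous_on {u..v} q \<Longrightarrow> (\<lambda>s. \<alpha> s * q s) integrable_on {u..v}"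
  using set_borel_integral_eq_integral(1)[OF set_integrable_alpha_mult] .

lemma set_borel_measurable_alpha_shift:
  assumes "0 \<le> p"
  shows "set_borel_measurable lborel {0..L} (\<lambda>s. \<alpha> (p + s))"
proof -
  have "(\<lambda>s. indicator {0..} (p + s) * \<alpha> (p + s)) \<in> borel_measurable lborel"
    using measurable_compose[of "\<lambda>s. p + s" lborel, OF _ set_borel_measurable_alpha[unfolded set_borel_measurable_def]]
    by simp
  then have "(\<lambda>s. indicator {0..L} s * (indicator {0..} (p + s) * \<alpha> (p + s))) \<in> borel_measurable lborel"
    by measurable
  also have "(\<lambda>s. indicator {0..L} s * (indicator {0..} (p + s) * \<alpha> (p + s))) = (\<lambda>s. indicator {0..L} s * \<alpha> (p + s))"
    using assms by (auto simp: indicator_def fun_eq_iff)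
  finally show ?thesis by (simp add: set_borel_measurable_def)
qed

lemma set_integrable_alpha_shift_mult:
  "0 \<le> p \<Longrightarrow> continuous_on {0..L} q \<Longrightarrow> set_integrable lborel {0..L} (\<lambda>s. \<alpha> (p + s) * q s)"
  by (rule set_integrable_bounded_mult_continuous[OF set_borel_measurable_alpha_shift])
    (use alpha_nonneg alpha_le_one in auto)

lemma integrable_dissipation: "0 \<le> u \<Longrightarrow> dissipation integrable_on {u..v}"
  by (intro integrable_alpha_mult continuous_intros continuous_on_subset[OF continuous_on_Bs_z]) auto

lemma integral_dissipation_nonneg: "0 \<le> u \<Longrightarrow> 0 \<le> integral {u..v} dissipation"
  by (intro integral_nonneg integrable_dissipation) (auto intro!: dissipation_nonneg)

text \<open>
  The state space is not of sort \<open>banach\<close>, so vector-valued integrals over \<open>[0, t + h]\<close>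
  cannot be split at \<open>t\<close>; the Duhamel increment is therefore stated weakly, tested against
  every \<open>e\<close>.
\<close>

lemma duhamel_increment:
  assumes t: "0 \<le> t" and h: "0 \<le> h"
  shows "((\<lambda>s. inner e (S (t + h - s) (feedback s))) has_integral inner e (S h (z t) - z (t + h))) {t..t+h}"
proof -
  define G where "G = (\<lambda>s. inner e (S (t + h - s) (feedback s)))"
  have whole: "(G has_integral inner e (S (t + h) z0 - z (t + h))) {0..t+h}"
    using has_integral_linear[OF duhamel[of "t + h"] bounded_linear_inner_right[of e]] t h
    by (simp add: G_def o_def)
  have "((\<lambda>s. S h (S (t - s) (feedback s))) has_integral S h (S t z0 - z t)) {0..t}"
    using has_integral_linear[OF duhamel[OF t] bounded_linear_S[OF h]] by (simp add: o_def)
  then have "((\<lambda>s. S (t + h - s) (feedback s)) has_integral S h (S t z0 - z t)) {0..t}"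
    by (rule has_integral_eq[rotated]) (use h in \<open>auto simp: S_add[symmetric] algebra_simps\<close>)
  then have initial: "(G has_integral inner e (S h (S t z0 - z t))) {0..t}"
    using has_integral_linear[OF _ bounded_linear_inner_right[of e]] by (simp add: G_def o_def)
  have "integral {t..t+h} G = integral {0..t+h} G - integral {0..t} G"
    using Henstock_Kurzweil_Integration.integral_combine[of 0 t "t + h" G] t h
      has_integral_integrable[OF whole] by simp
  also have "\<dots> = inner e (S h (z t) - z (t + h))"
    using integral_unique[OF whole] integral_unique[OF initial] S_add[OF h t, of z0] t h
    by (simp add: S_diff inner_diff_right add.commute)
  finally show ?thesis
    using integrable_subinterval_real[OF has_integral_integrable[OF whole], of t "t + h"] t
    by (simp add: has_integral_iff G_def)
qed

lemma norm_duhamel_increment_le: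
  assumes t: "0 \<le> t" and h: "0 \<le> h"
  shows "norm (S h (z t) - z (t + h)) \<le> Bnorm * integral {t..t+h} (\<lambda>s. \<alpha> s * norm (Bs (z s)))"
proof -
  have "(\<lambda>s. \<alpha> s * norm (Bs (z s))) integrable_on {t..t+h}"
    using t by (intro integrable_alpha_mult continuous_intros continuous_on_subset[OF continuous_on_Bs_z]) auto
  moreover have "norm (S (t + h - s) (feedback s)) \<le> Bnorm * (\<alpha> s * norm (Bs (z s)))" if "s \<in> {t..t+h}" for s
  proof -
    have "norm (S (t + h - s) (feedback s)) \<le> \<alpha> s * norm (B (Bs (z s)))"
      using that t norm_S_le[of "t + h - s" "feedback s"] alpha_nonneg[of s] by simp
    also have "\<dots> \<le> \<alpha> s * (Bnorm * norm (Bs (z s)))"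
      using that t alpha_nonneg[of s] norm_B_le by (intro mult_left_mono) auto
    finally show ?thesis by (simp add: mult_ac)
  qed
  ultimately show ?thesis
    using norm_le_integral_of_weak_has_integral[OF duhamel_increment[OF t h],
        of "\<lambda>s. Bnorm * (\<alpha> s * norm (Bs (z s)))"]
    by (simp add: integrable_on_mult_right)
qed

lemma norm_feedback_le: "s \<ge> 0 \<Longrightarrow> norm (feedback s) \<le> norm (B (Bs (z s)))"
  using alpha_nonneg[of s] alpha_le_one[of s] by (simp add: mult_left_le_one_le)

lemma norm_duhamel_increment_le_sup:
  assumes t: "0 \<le> t" and h: "0 \<le> h" and M: "\<And>s. s \<in> {t..t+h} \<Longrightarrow> norm (B (Bs (z s))) \<le> M"
  shows "norm (S h (z t) - z (t + h)) \<le> M * h"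
proof -
  have "norm (S (t + h - s) (feedback s)) \<le> M" if "s \<in> {t..t+h}" for s
    using that t norm_S_le[of "t + h - s" "feedback s"] norm_feedback_le[of s] M[of s] by simp
  then show ?thesis
    using norm_le_integral_of_weak_has_integral[OF duhamel_increment[OF t h], of "\<lambda>_. M"] h
    by (simp add: mult.commute integrable_const_ivl)
qed

lemma norm_z_increment_sq_le:
  assumes t: "0 \<le> t" and h: "0 \<le> h" and \<eta>: "0 \<le> \<eta>"
    and close: "\<And>s. s \<in> {t..t+h} \<Longrightarrow> \<bar>inner (S h (z t)) (S (t + h - s) (feedback s)) - dissipation s\<bar> \<le> \<eta>"
  shows "(norm (z (t + h)))\<^sup>2 \<le> (norm (z t))\<^sup>2 - 2 * integral {t..t+h} dissipation + 2 * \<eta> * h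
           + (norm (S h (z t) - z (t + h)))\<^sup>2"
proof -
  define y where "y = S h (z t)"
  define w where "w = y - z (t + h)"
  have "((\<lambda>s. inner y (S (t + h - s) (feedback s)) - dissipation s)
      has_integral inner y w - integral {t..t+h} dissipation) {t..t+h}"
    using has_integral_diff[OF duhamel_increment[OF t h] integrable_integral[OF integrable_dissipation[OF t]]]
    by (simp add: y_def w_def)
  then have "norm (inner y w - integral {t..t+h} dissipation) \<le> \<eta> * h"
    by (rule order_trans[OF has_integral_bound_real[OF \<eta> finite.emptyI]]) (use close h in \<open>auto simp: y_def\<close>)
  then have "inner y w \<ge> integral {t..t+h} dissipation - \<eta> * h" by simp
  moreover have "(norm (z (t + h)))\<^sup>2 = (norm y)\<^sup>2 - 2 * inner y w + (norm w)\<^sup>2"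
    by (simp add: w_def power2_norm_eq_inner inner_diff_left inner_diff_right inner_commute)
  moreover have "(norm y)\<^sup>2 \<le> (norm (z t))\<^sup>2"
    using norm_S_le[OF h] by (simp add: y_def power_mono)
  ultimately show ?thesis unfolding y_def w_def by linarith
qed

lemma short_steps_uniformly_close:
  assumes Tm: "0 \<le> Tm" and \<epsilon>: "\<epsilon> > 0"
  obtains \<delta> where "0 < \<delta>" "\<delta> \<le> 1"
    "\<And>t h s. 0 \<le> t \<Longrightarrow> t \<le> Tm \<Longrightarrow> 0 \<le> h \<Longrightarrow> h \<le> \<delta> \<Longrightarrow> s \<in> {t..t+h} \<Longrightarrow>
       norm (S h (z t) - z s) \<le> 2 * \<epsilon> \<and> norm (S (t + h - s) (B (Bs (z s))) - B (Bs (z s))) \<le> \<epsilon>"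
proof -
  define I where "I = {0..Tm+1}"
  have I: "compact I" by (simp add: I_def)
  have zc: "continuous_on I z" and uc: "continuous_on I (\<lambda>s. B (Bs (z s)))"
    using continuous_on_z continuous_on_B_Bs_z by (auto simp: I_def elim!: continuous_on_subset)
  obtain \<delta>1 where \<delta>1: "\<delta>1 > 0" "\<And>x r. x \<in> z ` I \<Longrightarrow> 0 \<le> r \<Longrightarrow> r \<le> \<delta>1 \<Longrightarrow> norm (S r x - x) \<le> \<epsilon>"
    using uniform_strong_continuity[OF compact_continuous_image[OF zc I] \<epsilon>] by blast
  obtain \<delta>2 where \<delta>2: "\<delta>2 > 0"
    "\<And>x r. x \<in> (\<lambda>s. B (Bs (z s))) ` I \<Longrightarrow> 0 \<le> r \<Longrightarrow> r \<le> \<delta>2 \<Longrightarrow> norm (S r x - x) \<le> \<epsilon>"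
    using uniform_strong_continuity[OF compact_continuous_image[OF uc I] \<epsilon>] by blast
  obtain \<delta>3 where \<delta>3: "\<delta>3 > 0" "\<And>s s'. s \<in> I \<Longrightarrow> s' \<in> I \<Longrightarrow> dist s' s < \<delta>3 \<Longrightarrow> dist (z s') (z s) < \<epsilon>"
    using compact_uniformly_continuous[OF zc I] \<epsilon> unfolding uniformly_continuous_on_def by metis
  show ?thesis
  proof (rule that[of "min (min \<delta>1 \<delta>2) (min (\<delta>3 / 2) 1)"])
    fix t h s assume t: "0 \<le> t" "t \<le> Tm" and h: "0 \<le> h" "h \<le> min (min \<delta>1 \<delta>2) (min (\<delta>3 / 2) 1)"
      and s: "s \<in> {t..t+h}"
    have tI: "t \<in> I" and sI: "s \<in> I" using t h s by (auto simp: I_def)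
    have "norm (S h (z t) - z s) \<le> norm (S h (z t) - z t) + norm (z t - z s)"
      using norm_triangle_ineq[of "S h (z t) - z t" "z t - z s"] by simp
    also have "\<dots> \<le> \<epsilon> + \<epsilon>"
      using \<delta>1(2)[of "z t" h] \<delta>3(2)[OF sI tI] tI s h \<delta>3(1) by (auto simp: dist_norm)
    finally show "norm (S h (z t) - z s) \<le> 2 * \<epsilon> \<and> norm (S (t + h - s) (B (Bs (z s))) - B (Bs (z s))) \<le> \<epsilon>"
      using \<delta>2(2)[of "B (Bs (z s))" "t + h - s"] sI s h by auto
  qed (use \<delta>1 \<delta>2 \<delta>3 in auto)
qed

lemma inner_free_step_dissipation_le:
  assumes t: "0 \<le> t" and s: "s \<in> {t..t+h}"
    and close: "norm (S h (z t) - z s) \<le> 2 * \<epsilon>" "norm (S (t + h - s) (B (Bs (z s))) - B (Bs (z s))) \<le> \<epsilon>"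
    and M: "norm (z s) \<le> M1" "norm (B (Bs (z s))) \<le> M2"
  shows "\<bar>inner (S h (z t)) (S (t + h - s) (feedback s)) - dissipation s\<bar> \<le> \<epsilon> * (2 * M2 + M1)"
proof -
  have "\<bar>inner (S h (z t)) (S (t + h - s) (feedback s)) - inner (z s) (feedback s)\<bar>
      \<le> norm (S h (z t) - z s) * norm (B (Bs (z s))) + norm (z s) * norm (S (t + h - s) (B (Bs (z s))) - B (Bs (z s)))"
    using s t by (intro inner_S_perturbation_le alpha_nonneg alpha_le_one) auto
  also have "\<dots> \<le> 2 * \<epsilon> * M2 + M1 * \<epsilon>"
    using close M order_trans[OF norm_ge_zero close(2)] order_trans[OF norm_ge_zero M(1)]
    by (intro add_mono mult_mono) auto
  also have "\<dots> = \<epsilon> * (2 * M2 + M1)" by (simp add: algebra_simps)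
  finally show ?thesis by (simp only: inner_z_feedback)
qed

lemma local_energy_estimate:
  assumes Tm: "0 \<le> Tm" and \<epsilon>: "\<epsilon> > 0"
  shows "\<exists>\<delta>>0. \<forall>t h. 0 \<le> t \<longrightarrow> t \<le> Tm \<longrightarrow> 0 < h \<longrightarrow> h \<le> \<delta> \<longrightarrow>
     (norm (z (t + h)))\<^sup>2 \<le> (norm (z t))\<^sup>2 - 2 * integral {t..t+h} dissipation + \<epsilon> * h"
proof -
  have "continuous_on {0..Tm+1} z" "continuous_on {0..Tm+1} (\<lambda>s. B (Bs (z s)))"
    using continuous_on_z continuous_on_B_Bs_z by (auto elim!: continuous_on_subset)
  then obtain M1 M2 where M1: "M1 > 0" "\<And>s. s \<in> {0..Tm+1} \<Longrightarrow> norm (z s) \<le> M1"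
    and M2: "M2 > 0" "\<And>s. s \<in> {0..Tm+1} \<Longrightarrow> norm (B (Bs (z s))) \<le> M2"
    using bounded_on_Icc by metis
  define K where "K = 2 * M2 + M1"
  have K: "K > 0" using M1 M2 by (simp add: K_def)
  obtain \<delta>0 where \<delta>0: "0 < \<delta>0" "\<delta>0 \<le> 1"
    "\<And>t h s. 0 \<le> t \<Longrightarrow> t \<le> Tm \<Longrightarrow> 0 \<le> h \<Longrightarrow> h \<le> \<delta>0 \<Longrightarrow> s \<in> {t..t+h} \<Longrightarrow>
       norm (S h (z t) - z s) \<le> 2 * (\<epsilon> / 4 / K)
       \<and> norm (S (t + h - s) (B (Bs (z s))) - B (Bs (z s))) \<le> \<epsilon> / 4 / K"
    using short_steps_uniformly_close[OF Tm, of "\<epsilon> / 4 / K"] \<epsilon> K by auto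
  define \<delta> where "\<delta> = min \<delta>0 (\<epsilon> / (2 * M2\<^sup>2))"
  show ?thesis
  proof (intro exI[of _ \<delta>] conjI allI impI)
    show "\<delta> > 0" using \<delta>0 \<epsilon> M2 by (simp add: \<delta>_def)
    fix t h assume t: "0 \<le> t" "t \<le> Tm" and h: "0 < h" "h \<le> \<delta>"
    have sI: "s \<in> {0..Tm+1}" if "s \<in> {t..t+h}" for s using that t h \<delta>0(2) by (auto simp: \<delta>_def)
    have "norm (S h (z t) - z (t + h)) \<le> M2 * h"
      using t h M2(2) sI by (intro norm_duhamel_increment_le_sup) auto
    then have "(norm (S h (z t) - z (t + h)))\<^sup>2 \<le> (M2 * h)\<^sup>2" by (rule power_mono) simp
    also have "\<dots> = (M2\<^sup>2 * h) * h" by (simp add: power2_eq_square)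
    also have "\<dots> \<le> \<epsilon> / 2 * h"
    proof (rule mult_right_mono)
      have "h \<le> \<epsilon> / (2 * M2\<^sup>2)" using h(2) by (simp add: \<delta>_def)
      then show "M2\<^sup>2 * h \<le> \<epsilon> / 2" using M2(1) by (simp add: field_simps)
    qed (use h in simp)
    finally have w: "(norm (S h (z t) - z (t + h)))\<^sup>2 \<le> \<epsilon> / 2 * h" .
    have "\<bar>inner (S h (z t)) (S (t + h - s) (feedback s)) - dissipation s\<bar> \<le> \<epsilon> / 4 / K * K"
      if s: "s \<in> {t..t+h}" for s
      using \<delta>0(3)[OF t _ _ s] h M1(2)[OF sI[OF s]] M2(2)[OF sI[OF s]] unfolding K_def
      by (intro inner_free_step_dissipation_le[OF t(1) s]) (auto simp: \<delta>_def)
    with K have "\<bar>inner (S h (z t)) (S (t + h - s) (feedback s)) - dissipation s\<bar> \<le> \<epsilon> / 4"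
      if "s \<in> {t..t+h}" for s
      using that by simp
    from norm_z_increment_sq_le[OF t(1) _ _ this] w h \<epsilon>
    show "(norm (z (t + h)))\<^sup>2 \<le> (norm (z t))\<^sup>2 - 2 * integral {t..t+h} dissipation + \<epsilon> * h"
      by simp
  qed
qed

lemma energy_inequality:
  assumes t1: "0 \<le> t1" and t12: "t1 \<le> t2"
  shows "(norm (z t2))\<^sup>2 + 2 * integral {t1..t2} dissipation \<le> (norm (z t1))\<^sup>2"
proof -
  let ?\<phi> = "\<lambda>t. (norm (z t))\<^sup>2 + 2 * integral {t1..t} dissipation"
  have "?\<phi> t2 \<le> ?\<phi> t1"
  proof (rule le_of_small_increments[OF t12])
    fix \<epsilon> :: real assume "\<epsilon> > 0"
    then obtain \<delta> where "\<delta> > 0" and step: "\<forall>t h. 0 \<le> t \<longrightarrow> t \<le> t2 \<longrightarrow> 0 < h \<longrightarrow> h \<le> \<delta> \<longrightarrow>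
        (norm (z (t + h)))\<^sup>2 \<le> (norm (z t))\<^sup>2 - 2 * integral {t..t+h} dissipation + \<epsilon> * h"
      using local_energy_estimate[of t2 \<epsilon>] t1 t12 by auto
    have "?\<phi> (t + h) \<le> ?\<phi> t + \<epsilon> * h" if "t1 \<le> t" "t \<le> t2" "0 < h" "h \<le> \<delta>" for t h
    proof -
      have "integral {t1..t+h} dissipation = integral {t1..t} dissipation + integral {t..t+h} dissipation"
        using Henstock_Kurzweil_Integration.integral_combine[of t1 t "t + h" dissipation] that
          integrable_dissipation[OF t1] by simp
      moreover have "(norm (z (t + h)))\<^sup>2 \<le> (norm (z t))\<^sup>2 - 2 * integral {t..t+h} dissipation + \<epsilon> * h"
        using step that t1 by simp
      ultimately show ?thesis by linarith
    qed
    then show "\<exists>\<delta>>0. \<forall>t h. t1 \<le> t \<longrightarrow> t \<le> t2 \<longrightarrow> 0 < h \<longrightarrow> h \<le> \<delta> \<longrightarrow> ?\<phi> (t + h) \<le> ?\<phi> t + \<epsilon> * h"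
      using \<open>\<delta> > 0\<close> by blast
  qed
  then show ?thesis by simp
qed

lemma norm_z_antimono:
  assumes "0 \<le> t1" "t1 \<le> t2"
  shows "norm (z t2) \<le> norm (z t1)"
proof (rule power2_le_imp_le)
  show "(norm (z t2))\<^sup>2 \<le> (norm (z t1))\<^sup>2"
    using energy_inequality[OF assms] integral_dissipation_nonneg[OF assms(1), of t2] by linarith
qed simp

section \<open>Decay across windows of positive density\<close>

lemma integral_alpha_le: "0 \<le> a \<Longrightarrow> 0 \<le> T \<Longrightarrow> integral {a..a+T} \<alpha> \<le> T"
  using integral_le[of \<alpha> "{a..a+T}" "\<lambda>_. 1"] integrable_alpha_mult[of a "a + T" "\<lambda>_. 1"]
  by (auto simp: alpha_le_one)

lemma dissipation_Cauchy_Schwarz: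
  assumes a: "0 \<le> a" and T: "0 \<le> T"
  shows "(integral {a..a+T} (\<lambda>s. \<alpha> s * norm (Bs (z s))))\<^sup>2 \<le> T * integral {a..a+T} dissipation"
proof -
  have q: "continuous_on {a..a+T} (\<lambda>s. norm (Bs (z s)))"
    using a by (intro continuous_intros continuous_on_subset[OF continuous_on_Bs_z]) auto
  have "(integral {a..a+T} (\<lambda>s. \<alpha> s * norm (Bs (z s))))\<^sup>2
      \<le> integral {a..a+T} \<alpha> * integral {a..a+T} dissipation"
    using a integrable_alpha_mult[of a "a + T" "\<lambda>_. 1"]
    by (intro integral_weighted_Cauchy_Schwarz integrable_alpha_mult q integrable_dissipation)
      (auto intro: alpha_nonneg)
  also have "\<dots> \<le> T * integral {a..a+T} dissipation"
    using integral_alpha_le[OF a T] integral_dissipation_nonneg[OF a] by (rule mult_right_mono)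
  finally show ?thesis .
qed

lemma observation_of_free_trajectory_le:
  assumes a: "0 \<le> a" and s: "0 \<le> s" "s \<le> T"
  shows "\<alpha> (a + s) * (norm (Bs (S s (z a))))\<^sup>2
    \<le> 2 * dissipation (a + s) + 2 * Bnorm ^ 4 * (integral {a..a+T} (\<lambda>r. \<alpha> r * norm (Bs (z r))))\<^sup>2"
proof -
  define P where "P = integral {a..a+T} (\<lambda>r. \<alpha> r * norm (Bs (z r)))"
  have "integral {a..a+s} (\<lambda>r. \<alpha> r * norm (Bs (z r))) \<le> P"
    unfolding P_def using a s
    by (intro integral_subset_le integrable_alpha_mult continuous_intros continuous_on_subset[OF continuous_on_Bs_z])
      (auto intro!: mult_nonneg_nonneg alpha_nonneg)
  then have "norm (S s (z a) - z (a + s)) \<le> Bnorm * P"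
    using norm_duhamel_increment_le[OF a s(1)] Bnorm_pos by (meson mult_left_mono less_imp_le order_trans)
  then have "Bnorm * norm (S s (z a) - z (a + s)) \<le> Bnorm * (Bnorm * P)"
    using Bnorm_pos by (intro mult_left_mono) auto
  then have "norm (Bs (S s (z a) - z (a + s))) \<le> Bnorm\<^sup>2 * P"
    using norm_Bs_le[of "S s (z a) - z (a + s)"] by (simp add: power2_eq_square mult.assoc)
  then have "norm (Bs (S s (z a))) \<le> norm (Bs (z (a + s))) + Bnorm\<^sup>2 * P"
    using norm_triangle_ineq[of "Bs (z (a + s))" "Bs (S s (z a) - z (a + s))"]
    by (simp add: linear_simps bounded_linear_Bs)
  then have "(norm (Bs (S s (z a))))\<^sup>2 \<le> (norm (Bs (z (a + s))) + Bnorm\<^sup>2 * P)\<^sup>2"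
    by (intro power_mono) auto
  also have "\<dots> \<le> 2 * (norm (Bs (z (a + s))))\<^sup>2 + 2 * Bnorm ^ 4 * P\<^sup>2"
    using sum_squares_bound[of "norm (Bs (z (a + s)))" "Bnorm\<^sup>2 * P"]
    by (simp add: power2_sum power_mult_distrib mult.commute flip: power_mult)
  finally have "\<alpha> (a + s) * (norm (Bs (S s (z a))))\<^sup>2
      \<le> \<alpha> (a + s) * (2 * (norm (Bs (z (a + s))))\<^sup>2) + \<alpha> (a + s) * (2 * Bnorm ^ 4 * P\<^sup>2)"
    using alpha_nonneg[of "a + s"] a s by (simp add: distrib_left[symmetric] mult_left_mono)
  also have "\<dots> \<le> 2 * dissipation (a + s) + 2 * Bnorm ^ 4 * P\<^sup>2"
    using mult_left_le_one_le[of "2 * Bnorm ^ 4 * P\<^sup>2" "\<alpha> (a + s)"]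
      alpha_le_one[of "a + s"] alpha_nonneg[of "a + s"] a s Bnorm_pos by simp
  finally show ?thesis by (simp add: P_def)
qed

definition observability_cost :: "real \<Rightarrow> real" where
  "observability_cost T0 = 1 + Bnorm ^ 4 * T0\<^sup>2"

lemma observability_cost_pos: "observability_cost T0 > 0"
  using Bnorm_pos by (simp add: observability_cost_def add_pos_nonneg)

lemma integrable_free_observation:
  "0 \<le> a \<Longrightarrow> (\<lambda>s. \<alpha> (a + s) * (norm (Bs (S s x)))\<^sup>2) integrable_on {0..T}"
  by (intro set_borel_integral_eq_integral(1) set_integrable_alpha_shift_mult continuous_intros
      continuous_on_subset[OF continuous_on_Bs_S]) auto

lemma has_integral_dissipation_shift:
  assumes "0 \<le> a"
  shows "((\<lambda>s. dissipation (a + s)) has_integral integral {a..a+T} dissipation) {0..T}"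
proof -
  have "(dissipation has_integral integral {a..a+T} dissipation) {a..a+T}"
    using integrable_dissipation[OF assms] by blast
  from has_integral_shift_real_ivl[OF this, of a] show ?thesis by (simp add: add.commute)
qed

lemma observability_decay:
  assumes a: "0 \<le> a" and T: "0 < T" "T \<le> T0"
    and obs: "\<And>x. C * (norm x)\<^sup>2 \<le> integral {0..T} (\<lambda>s. \<alpha> (a + s) * (norm (Bs (S s x)))\<^sup>2)"
  shows "(norm (z (a + T)))\<^sup>2 \<le> exp (- (C / observability_cost T0)) * (norm (z a))\<^sup>2"
proof -
  define D where "D = integral {a..a+T} dissipation"
  define P where "P = integral {a..a+T} (\<lambda>r. \<alpha> r * norm (Bs (z r)))"
  define \<Gamma> where "\<Gamma> = observability_cost T0"
  have \<Gamma>: "\<Gamma> > 0" using observability_cost_pos by (simp add: \<Gamma>_def)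
  have D: "0 \<le> D" using integral_dissipation_nonneg[OF a] by (simp add: D_def)
  have "C * (norm (z a))\<^sup>2 \<le> integral {0..T} (\<lambda>s. \<alpha> (a + s) * (norm (Bs (S s (z a))))\<^sup>2)"
    by (rule obs)
  also have "\<dots> \<le> integral {0..T} (\<lambda>s. 2 * dissipation (a + s) + 2 * Bnorm ^ 4 * P\<^sup>2)"
    using has_integral_dissipation_shift[OF a, of T] observation_of_free_trajectory_le[OF a]
    by (intro integral_le integrable_free_observation[OF a] integrable_add integrable_on_mult_right)
      (auto simp: P_def)
  also have "\<dots> = 2 * D + 2 * Bnorm ^ 4 * P\<^sup>2 * T"
    using has_integral_add[OF has_integral_mult_right[OF has_integral_dissipation_shift[OF a, of T], of 2]
        has_integral_const_real[of "2 * Bnorm ^ 4 * P\<^sup>2" 0 T]] T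
    by (simp add: integral_unique D_def mult_ac)
  also have "\<dots> \<le> 2 * D + 2 * Bnorm ^ 4 * (T * D) * T"
    using dissipation_Cauchy_Schwarz[OF a, of T] T
    by (intro add_left_mono mult_right_mono mult_left_mono) (auto simp: P_def D_def)
  also have "\<dots> \<le> 2 * D * \<Gamma>"
    using T D Bnorm_pos
    by (simp add: \<Gamma>_def observability_cost_def algebra_simps power2_eq_square mult_left_mono mult_mono)
  finally have "C / \<Gamma> * (norm (z a))\<^sup>2 \<le> 2 * D" using \<Gamma> by (simp add: field_simps)
  then have "(norm (z (a + T)))\<^sup>2 \<le> (1 - C / \<Gamma>) * (norm (z a))\<^sup>2"
    using energy_inequality[OF a, of "a + T"] T by (simp add: D_def algebra_simps)
  also have "\<dots> \<le> exp (- (C / \<Gamma>)) * (norm (z a))\<^sup>2"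
    using exp_ge_add_one_self[of "- (C / \<Gamma>)"] by (intro mult_right_mono) auto
  finally show ?thesis by (simp add: \<Gamma>_def)
qed

lemma dense_window_decay:
  assumes K: "\<forall>T\<in>{0<..T0}. \<forall>\<alpha>'. Linf01 {0..T} \<alpha>' \<and> (LBINT t:{0..T}. \<alpha>' t) \<ge> \<rho> * T
              \<longrightarrow> classK S Bs T (c T) \<alpha>'"
    and p: "0 \<le> p" and L: "0 < L" "L \<le> T0" and dense: "integral {p..p+L} \<alpha> \<ge> \<rho> * L"
  shows "(norm (z (p + L)))\<^sup>2 \<le> exp (- (c L / observability_cost T0)) * (norm (z p))\<^sup>2"
proof (rule observability_decay[OF p L])
  have "Linf01 {0..L} (\<lambda>s. \<alpha> (p + s))"
    using set_borel_measurable_alpha_shift[OF p] alpha_nonneg alpha_le_one p by (simp add: Linf01_def)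
  moreover have "(LBINT t:{0..L}. \<alpha> (p + t)) = integral {p..p+L} \<alpha>"
    using set_borel_integral_eq_integral(2)[OF set_integrable_alpha_shift_mult[OF p, of L "\<lambda>_. 1"]]
      integral_shift_real_ivl[of p p "p + L" \<alpha>]
    by (simp add: add.commute)
  ultimately have K_window: "classK S Bs L (c L) (\<lambda>s. \<alpha> (p + s))" using K L dense by auto
  fix x
  from K_window have "c L * (norm x)\<^sup>2 \<le> (LBINT t:{0..L}. \<alpha> (p + t) * (norm (Bs (S t x)))\<^sup>2)"
    by (simp add: classK_def)
  also have "\<dots> = integral {0..L} (\<lambda>s. \<alpha> (p + s) * (norm (Bs (S s x)))\<^sup>2)"
    by (intro set_borel_integral_eq_integral(2) set_integrable_alpha_shift_mult[OF p] continuous_intros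
        continuous_on_subset[OF continuous_on_Bs_S]) auto
  finally show "c L * (norm x)\<^sup>2 \<le> integral {0..L} (\<lambda>s. \<alpha> (p + s) * (norm (Bs (S s x)))\<^sup>2)" .
qed

lemma interval_decay:
  assumes K: "\<forall>T\<in>{0<..T0}. \<forall>\<alpha>'. Linf01 {0..T} \<alpha>' \<and> (LBINT t:{0..T}. \<alpha>' t) \<ge> \<rho> * T
              \<longrightarrow> classK S Bs T (c T) \<alpha>'"
    and T0: "0 < T0" and m: "\<And>L. L \<in> {T0/2..T0} \<Longrightarrow> m \<le> c L"
    and ab: "0 \<le> a" "a < b" and dense: "(LBINT t:{a..b}. \<alpha> t) \<ge> \<rho> * (b - a)"
  shows "(norm (z b))\<^sup>2 \<le> exp (- (min (c (b - a)) m / observability_cost T0)) * (norm (z a))\<^sup>2"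
proof -
  define \<Gamma> where "\<Gamma> = observability_cost T0"
  have \<Gamma>: "\<Gamma> > 0" using observability_cost_pos by (simp add: \<Gamma>_def)
  have dense': "integral {a..b} \<alpha> \<ge> \<rho> * (b - a)"
    using dense set_borel_integral_eq_integral(2)[OF set_integrable_alpha_mult[OF ab(1), of b "\<lambda>_. 1"]] by simp
  have exp_mono: "exp (- (r / \<Gamma>)) * (norm (z a))\<^sup>2 \<le> exp (- (min (c (b - a)) m / \<Gamma>)) * (norm (z a))\<^sup>2"
    if "min (c (b - a)) m \<le> r" for r
    using that \<Gamma> by (intro mult_right_mono) (auto simp: divide_right_mono)
  show ?thesis
  proof (cases "b - a \<le> T0")
    case True
    then show ?thesis
      using dense_window_decay[OF K ab(1), of "b - a"] exp_mono[of "c (b - a)"] ab dense'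
      by (simp add: \<Gamma>_def)
  next
    case False
    \<comment> \<open>a long interval contains a dense window of length in \<open>(T0/2, T0]\<close>, where \<open>c \<ge> m\<close>\<close>
    obtain p L where pL: "a \<le> p" "p + L \<le> b" "T0 / 2 < L" "L \<le> T0" "integral {p..p+L} \<alpha> \<ge> \<rho> * L"
      using exists_dense_subinterval[OF integrable_alpha_mult[of a b "\<lambda>_. 1", simplified] T0 _ dense'] ab False
      by auto
    have "norm (z b) \<le> norm (z (p + L))" using norm_z_antimono[of "p + L" b] pL ab T0 by simp
    then have "(norm (z b))\<^sup>2 \<le> (norm (z (p + L)))\<^sup>2" by (simp add: power_mono)
    also have "\<dots> \<le> exp (- (c L / \<Gamma>)) * (norm (z p))\<^sup>2"
      unfolding \<Gamma>_def using pL ab T0 by (intro dense_window_decay[OF K]) auto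
    also have "\<dots> \<le> exp (- (c L / \<Gamma>)) * (norm (z a))\<^sup>2"
      using norm_z_antimono[OF ab(1) pL(1)] by (simp add: power_mono)
    also have "\<dots> \<le> exp (- (min (c (b - a)) m / \<Gamma>)) * (norm (z a))\<^sup>2"
      using m[of L] pL by (intro exp_mono) auto
    finally show ?thesis by (simp add: \<Gamma>_def)
  qed
qed

lemma energy_decay_after_intervals:
  fixes a b :: "nat \<Rightarrow> real"
  assumes K: "\<forall>T\<in>{0<..T0}. \<forall>\<alpha>'. Linf01 {0..T} \<alpha>' \<and> (LBINT t:{0..T}. \<alpha>' t) \<ge> \<rho> * T
              \<longrightarrow> classK S Bs T (c T) \<alpha>'"
    and T0: "0 < T0" and m: "\<And>L. L \<in> {T0/2..T0} \<Longrightarrow> m \<le> c L"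
    and ab: "\<forall>n. 0 \<le> a n \<and> a n < b n"
    and disj: "\<forall>m n. m \<noteq> n \<longrightarrow> {a m<..<b m} \<inter> {a n<..<b n} = {}"
    and dens: "\<forall>n. (LBINT t:{a n..b n}. \<alpha> t) \<ge> \<rho> * (b n - a n)"
    and t: "Max (insert 0 (b ` {..<N})) \<le> t"
  shows "(norm (z t))\<^sup>2 \<le> exp (- (\<Sum>n<N. min (c (b n - a n)) m / observability_cost T0)) * (norm (z 0))\<^sup>2"
proof (rule decay_along_disjoint_intervals[where a=a and b=b])
  show "(norm (z t'))\<^sup>2 \<le> (norm (z s))\<^sup>2" if "0 \<le> s" "s \<le> t'" for s t'
    using norm_z_antimono[OF that] by (simp add: power_mono)
  show "(norm (z (b n)))\<^sup>2 \<le> exp (- (min (c (b n - a n)) m / observability_cost T0)) * (norm (z (a n)))\<^sup>2"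
    for n using interval_decay[OF K T0 m] ab dens by simp
  show "0 \<le> t" "\<forall>n\<in>{..<N}. b n \<le> t" using t by auto
qed (use ab disj in simp_all)

end

theorem theorem5p2:
  fixes S :: "real \<Rightarrow> 'h::{real_inner,complete_space} \<Rightarrow> 'h"
    and B :: "'u::{real_inner,complete_space} \<Rightarrow> 'h"
    and Bs :: "'h \<Rightarrow> 'u"
    and \<rho> T0 :: real
    and c :: "real \<Rightarrow> real"
    and a b :: "nat \<Rightarrow> real"
    and \<alpha> :: "real \<Rightarrow> real"
    and z0 :: 'h and z :: "real \<Rightarrow> 'h"
  assumes sg: "C0_contraction_semigroup S"
    and B: "bounded_linear B" and Bs: "is_adjoint B Bs"
    and rho: "\<rho> > 0" and T0: "T0 > 0"
    and c_pos: "\<forall>T>0. c T > 0" and c_cont: "continuous_on {0<..} c"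
    and K: "\<forall>T\<in>{0<..T0}. \<forall>\<alpha>'. Linf01 {0..T} \<alpha>' \<and> (LBINT t:{0..T}. \<alpha>' t) \<ge> \<rho> * T
              \<longrightarrow> classK S Bs T (c T) \<alpha>'"
    and ab: "\<forall>n. 0 \<le> a n \<and> a n < b n"
    and disj: "\<forall>m n. m \<noteq> n \<longrightarrow> {a m<..<b m} \<inter> {a n<..<b n} = {}"
    and alpha: "Linf01 {0..} \<alpha>"
    and dens: "\<forall>n. (LBINT t:{a n..b n}. \<alpha> t) \<ge> \<rho> * (b n - a n)"
    and div: "\<not> summable (\<lambda>n. c (b n - a n))"
    and sol: "mild_solution S B Bs \<alpha> z0 z"
  shows "((\<lambda>t. norm (z t)) \<longlongrightarrow> 0) at_top"
proof -
  interpret damped_system S B Bs \<alpha> z0 z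
    using sg B Bs alpha sol
    by (simp add: damped_system_def damped_system_axioms_def contraction_semigroup_def)
  have "continuous_on {T0/2..T0} c" using c_cont by (rule continuous_on_subset) (use T0 in auto)
  then obtain m where m: "m > 0" "\<And>L. L \<in> {T0/2..T0} \<Longrightarrow> m \<le> c L"
    by (rule continuous_pos_lower_bound) (use c_pos T0 in auto)
  define k where "k n = min (c (b n - a n)) m / observability_cost T0" for n
  have k: "0 \<le> k n" for n
    using c_pos ab m(1) observability_cost_pos[of T0] by (simp add: k_def less_imp_le)
  have "\<not> summable k"
    using not_summable_min[OF div m(1)] observability_cost_pos[of T0] by (simp add: k_def[abs_def])
  moreover have "\<exists>T. \<forall>t\<ge>T. (norm (z t))\<^sup>2 \<le> exp (- sum k {..<N}) * (norm (z 0))\<^sup>2" for N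
    using energy_decay_after_intervals[OF K T0 m(2) ab disj dens, of N] unfolding k_def by blast
  ultimately have "((\<lambda>t. (norm (z t))\<^sup>2) \<longlongrightarrow> 0) at_top"
    by (intro tendsto_zero_of_not_summable_decay[OF _ k]) auto
  then show ?thesis
    using tendsto_real_sqrt[of "\<lambda>t. (norm (z t))\<^sup>2" 0 at_top] by simp
qed

end
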